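(* In the unweighted setting (all offline weights equal to $1$), any algorithm for two-stage bipartite matching with advice that is $R$-robust is at most $C$-consistent, where $R+C\le \tfrac32$. In other words, no algorithm is simultaneously $R$-robust and $C$-consistent with $R+C>\tfrac32$.
   Context: Setting (two-stage bipartite matching with advice). A bipartite graph $G=(D,S,E)$ has offline vertices $S$ with weights $w_j$ (here all $w_j=1$) and online vertices $D=D_1\sqcup D_2$ arriving in two stages; $E_k$ is the set of edges between $D_k$ and $S$. An algorithm sees $(D_1,S,E_1)$ and the advice (a matching $A\subseteq E_1$), irrevocably chooses a (possibly random, or fractional) matching in $E_1$, then sees $E_2$ and chooses a matching in $E_2$ on the remaining capacity; its value is the (expected) total weight of matched offline vertices. $\mathsf{OPT}(G)$ is the maximum weight of a matching in $G$; $\mathsf{ADVICE}(G,A)=\sum_{j\in S_1}w_j+\max\{\sum_{j\text{ covered by }M}w_j: M\subseteq E_2\text{ a matching covering no vertex of } S_1\}$, where $S_1$ is the set of offline vertices covered by $A$. An algorithm is $R$-robust if its value is $\ge R\cdot\mathsf{OPT}(G)$ for all $G,A$, and $C$-consistent if its value is $\ge C\cdot\mathsf{ADVICE}(G,A)$ for all $G,A$. *)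

theory Defs
  imports Main "HOL.Real"
begin

(* Vertices (online and offline) are natural numbers; an edge (d, s) joins
   online vertex d to offline vertex s.  All offline weights are 1. *)

type_synonym edges = "(nat \<times> nat) set"
type_synonym frac = "nat \<times> nat \<Rightarrow> real"

definition on_load :: "edges \<Rightarrow> frac \<Rightarrow> nat \<Rightarrow> real" where
  "on_load E x i = (\<Sum>e\<in>{e\<in>E. fst e = i}. x e)"

definition off_load :: "edges \<Rightarrow> frac \<Rightarrow> nat \<Rightarrow> real" where
  "off_load E x j = (\<Sum>e\<in>{e\<in>E. snd e = j}. x e)"

definition frac_matching :: "edges \<Rightarrow> (nat \<Rightarrow> real) \<Rightarrow> frac \<Rightarrow> bool" where
  "frac_matching E cap x \<longleftrightarrow>
     (\<forall>e. 0 \<le> x e) \<and> (\<forall>e. e \<notin> E \<longrightarrow> x e = 0) \<and>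
     (\<forall>i. on_load E x i \<le> 1) \<and> (\<forall>j. off_load E x j \<le> cap j)"

definition matching :: "edges \<Rightarrow> bool" where
  "matching M \<longleftrightarrow>
     (\<forall>e\<in>M. \<forall>e'\<in>M. fst e = fst e' \<longrightarrow> e = e') \<and>
     (\<forall>e\<in>M. \<forall>e'\<in>M. snd e = snd e' \<longrightarrow> e = e')"

definition two_stage_instance ::
  "nat set \<Rightarrow> nat set \<Rightarrow> nat set \<Rightarrow> edges \<Rightarrow> edges \<Rightarrow> bool" where
  "two_stage_instance D1 D2 S E1 E2 \<longleftrightarrow>
     finite D1 \<and> finite D2 \<and> finite S \<and> D1 \<inter> D2 = {} \<and>
     E1 \<subseteq> D1 \<times> S \<and> E2 \<subseteq> D2 \<times> S"

(* OPT(G): maximum size (= weight, unit weights) of a matching in E1 \<union> E2 *)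
definition OPT :: "edges \<Rightarrow> edges \<Rightarrow> nat" where
  "OPT E1 E2 = Max (card ` {M. M \<subseteq> E1 \<union> E2 \<and> matching M})"

(* ADVICE(G,A) with S1 = offline vertices covered by A *)
definition ADVICE :: "edges \<Rightarrow> edges \<Rightarrow> edges \<Rightarrow> nat" where
  "ADVICE E1 E2 A = card (snd ` A) +
     Max (card ` {M. M \<subseteq> E2 \<and> matching M \<and> snd ` M \<inter> snd ` A = {}})"

(* An algorithm: stage 1 sees (D1, S, E1, A); stage 2 additionally sees (D2, E2).
   Randomised algorithms are represented by their fractional (expected) matchings. *)
type_synonym stage1 = "nat set \<Rightarrow> nat set \<Rightarrow> edges \<Rightarrow> edges \<Rightarrow> frac"
type_synonym stage2 = "nat set \<Rightarrow> nat set \<Rightarrow> edges \<Rightarrow> edges \<Rightarrow> nat set \<Rightarrow> edges \<Rightarrow> frac"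

definition valid_advice :: "edges \<Rightarrow> edges \<Rightarrow> bool" where
  "valid_advice E1 A \<longleftrightarrow> A \<subseteq> E1 \<and> matching A"

definition valid_alg :: "stage1 \<Rightarrow> stage2 \<Rightarrow> bool" where
  "valid_alg alg1 alg2 \<longleftrightarrow>
     (\<forall>D1 D2 S E1 E2 A. two_stage_instance D1 D2 S E1 E2 \<and> valid_advice E1 A \<longrightarrow>
        (let x1 = alg1 D1 S E1 A; x2 = alg2 D1 S E1 A D2 E2 in
          frac_matching E1 (\<lambda>_. 1) x1 \<and>
          frac_matching E2 (\<lambda>j. 1 - off_load E1 x1 j) x2))"

definition alg_value :: "stage1 \<Rightarrow> stage2 \<Rightarrow> nat set \<Rightarrow> nat set \<Rightarrow> nat set
    \<Rightarrow> edges \<Rightarrow> edges \<Rightarrow> edges \<Rightarrow> real" where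
  "alg_value alg1 alg2 D1 D2 S E1 E2 A =
     (let x1 = alg1 D1 S E1 A; x2 = alg2 D1 S E1 A D2 E2 in
       (\<Sum>j\<in>S. off_load E1 x1 j + off_load E2 x2 j))"

definition robust :: "stage1 \<Rightarrow> stage2 \<Rightarrow> real \<Rightarrow> bool" where
  "robust alg1 alg2 R \<longleftrightarrow>
     (\<forall>D1 D2 S E1 E2 A. two_stage_instance D1 D2 S E1 E2 \<and> valid_advice E1 A \<longrightarrow>
        alg_value alg1 alg2 D1 D2 S E1 E2 A \<ge> R * real (OPT E1 E2))"

definition consistent :: "stage1 \<Rightarrow> stage2 \<Rightarrow> real \<Rightarrow> bool" where
  "consistent alg1 alg2 C \<longleftrightarrow>
     (\<forall>D1 D2 S E1 E2 A. two_stage_instance D1 D2 S E1 E2 \<and> valid_advice E1 A \<longrightarrow>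
        alg_value alg1 alg2 D1 D2 S E1 E2 A \<ge> C * real (ADVICE E1 E2 A))"

end

theory Submission
  imports Defs
begin

text \<open>One first-stage vertex sees offline vertices 0 and 1, and the advice matches it to 0.
  The second-stage vertex is then adjacent either to 1 (the advice was right, ADVICE = 2) or
  to 0 (the advice was wrong, OPT = 2). If the algorithm puts mass \<open>a\<close> on the advised edge
  and \<open>b\<close> on the other one, the second stage recovers at most \<open>1 - b\<close> in the first scenario
  and at most \<open>1 - a\<close> in the second, so \<open>2C \<le> 1 + a\<close> and \<open>2R \<le> 1 + b\<close>; adding and
  using \<open>a + b \<le> 1\<close> gives \<open>R + C \<le> 3/2\<close>.\<close>

lemma card_matching_le_card_offline:
  assumes "matching M" "snd ` M \<subseteq> T" "finite T"
  shows "card M \<le> card T"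
proof -
  have "inj_on snd M" using assms(1) unfolding matching_def inj_on_def by blast
  then have "card M = card (snd ` M)" by (simp add: card_image)
  also have "\<dots> \<le> card T" using assms(2,3) by (simp add: card_mono)
  finally show ?thesis .
qed

lemma Max_card_matchings_eq_card_offline:
  assumes "finite T" "\<And>M. M \<in> F \<Longrightarrow> matching M \<and> snd ` M \<subseteq> T"
    and "M0 \<in> F" "card M0 = card T"
  shows "Max (card ` F) = card T"
proof (rule Max_eqI)
  have "card ` F \<subseteq> {..card T}"
    using assms(1,2) card_matching_le_card_offline by fastforce
  then show "finite (card ` F)" by (rule finite_subset) simp
  show "k \<le> card T" if "k \<in> card ` F" for k
    using that assms(1,2) card_matching_le_card_offline by fastforce
  show "card T \<in> card ` F" using assms(3,4) by (metis image_eqI)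
qed

lemma OPT_eq_card_offline:
  assumes "two_stage_instance D1 D2 S E1 E2"
    and "M0 \<subseteq> E1 \<union> E2" "matching M0" "snd ` M0 = S"
  shows "OPT E1 E2 = card S"
  unfolding OPT_def
proof (rule Max_card_matchings_eq_card_offline)
  show "finite S" using assms(1) unfolding two_stage_instance_def by simp
  show "matching M \<and> snd ` M \<subseteq> S" if "M \<in> {M. M \<subseteq> E1 \<union> E2 \<and> matching M}" for M
    using that assms(1) unfolding two_stage_instance_def by (auto dest!: subsetD)
  show "M0 \<in> {M. M \<subseteq> E1 \<union> E2 \<and> matching M}" using assms(2,3) by simp
  have "inj_on snd M0" using assms(3) unfolding matching_def inj_on_def by blast
  then show "card M0 = card S" using assms(4) by (metis card_image)
qed

lemma sum_off_load_eq_sum_edges: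
  assumes "finite E" "finite S" "snd ` E \<subseteq> S"
  shows "(\<Sum>j\<in>S. off_load E x j) = (\<Sum>e\<in>E. x e)"
  unfolding off_load_def using sum.group[OF assms] by simp

lemma alg_value_eq_sum_edges:
  assumes "two_stage_instance D1 D2 S E1 E2"
  shows "alg_value alg1 alg2 D1 D2 S E1 E2 A =
           (\<Sum>e\<in>E1. alg1 D1 S E1 A e) + (\<Sum>e\<in>E2. alg2 D1 S E1 A D2 E2 e)"
proof -
  have "finite E1" "snd ` E1 \<subseteq> S" "finite E2" "snd ` E2 \<subseteq> S" "finite S"
    using assms unfolding two_stage_instance_def
    by (auto intro: finite_subset[of _ "D1 \<times> S"] finite_subset[of _ "D2 \<times> S"])
  then show ?thesis
    unfolding alg_value_def Let_def sum.distrib by (simp add: sum_off_load_eq_sum_edges)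
qed

lemma edge_le_off_load:
  assumes "finite E" "e \<in> E" "\<And>e. 0 \<le> x e"
  shows "x e \<le> off_load E x (snd e)"
  unfolding off_load_def using assms by (intro member_le_sum) auto

lemma frac_matching_edge_le_cap:
  assumes "frac_matching E cap x" "finite E" "e \<in> E"
  shows "x e \<le> cap (snd e)"
proof -
  have "x e \<le> off_load E x (snd e)"
    using assms edge_le_off_load[of E e x] unfolding frac_matching_def by blast
  also have "\<dots> \<le> cap (snd e)" using assms(1) unfolding frac_matching_def by blast
  finally show ?thesis .
qed

lemma valid_alg_frac_matchings:
  assumes "valid_alg alg1 alg2" "two_stage_instance D1 D2 S E1 E2" "valid_advice E1 A"
  shows "frac_matching E1 (\<lambda>_. 1) (alg1 D1 S E1 A)"
    and "frac_matching E2 (\<lambda>j. 1 - off_load E1 (alg1 D1 S E1 A) j) (alg2 D1 S E1 A D2 E2)"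
  using assms unfolding valid_alg_def Let_def by blast+

definition fork_E1 :: edges where "fork_E1 = {(0, 0), (0, 1)}"
definition fork_advice :: edges where "fork_advice = {(0, 0)}"
definition fork_E2_trusted :: edges where "fork_E2_trusted = {(1, 1)}"
definition fork_E2_betrayed :: edges where "fork_E2_betrayed = {(1, 0)}"

abbreviation fork_x1 :: "stage1 \<Rightarrow> frac" where
  "fork_x1 alg1 \<equiv> alg1 {0} {0, 1} fork_E1 fork_advice"

lemma fork_instance:
  "two_stage_instance {0} {1} {0, 1} fork_E1 E2"
  "valid_advice fork_E1 fork_advice"
  if "E2 \<subseteq> {1} \<times> {0, 1}"
  using that
  unfolding two_stage_instance_def valid_advice_def matching_def fork_E1_def fork_advice_def
  by auto

lemma fork_first_stage_mass:
  assumes "valid_alg alg1 alg2"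
  shows "fork_x1 alg1 (0, 0) + fork_x1 alg1 (0, 1) \<le> 1"
proof -
  have "{e \<in> fork_E1. fst e = 0} = {(0, 0), (0, 1)}" by (auto simp: fork_E1_def)
  moreover have "on_load fork_E1 (fork_x1 alg1) 0 \<le> 1"
    using valid_alg_frac_matchings(1)[OF assms fork_instance[of "{}"]]
    unfolding frac_matching_def by auto
  ultimately show ?thesis unfolding on_load_def by simp
qed

lemma fork_second_stage_le:
  assumes "valid_alg alg1 alg2" "(1, j) \<in> E2" "E2 \<subseteq> {1} \<times> {0, 1}" "(0, j) \<in> fork_E1"
  shows "alg2 {0} {0, 1} fork_E1 fork_advice {1} E2 (1, j) \<le> 1 - fork_x1 alg1 (0, j)"
proof -
  note fm = valid_alg_frac_matchings[OF assms(1) fork_instance[OF assms(3)]]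
  have "finite E2" using assms(3) by (rule finite_subset) simp
  then have "alg2 {0} {0, 1} fork_E1 fork_advice {1} E2 (1, j)
               \<le> 1 - off_load fork_E1 (fork_x1 alg1) j"
    using frac_matching_edge_le_cap[OF fm(2) _ assms(2)] by simp
  also have "\<dots> \<le> 1 - fork_x1 alg1 (0, j)"
  proof -
    have "finite fork_E1" by (simp add: fork_E1_def)
    moreover have "\<And>e. 0 \<le> fork_x1 alg1 e" using fm(1) unfolding frac_matching_def by blast
    ultimately show ?thesis using edge_le_off_load[OF _ assms(4)] by force
  qed
  finally show ?thesis .
qed

lemma fork_consistency_bound:
  assumes "valid_alg alg1 alg2" "consistent alg1 alg2 C"
  shows "2 * C \<le> 1 + fork_x1 alg1 (0, 0)"
proof -
  have inst: "two_stage_instance {0} {1} {0, 1} fork_E1 fork_E2_trusted"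
    "valid_advice fork_E1 fork_advice"
    using fork_instance[of fork_E2_trusted] by (auto simp: fork_E2_trusted_def)
  have "Max (card ` {M. M \<subseteq> fork_E2_trusted \<and> matching M
                        \<and> snd ` M \<inter> snd ` fork_advice = {}}) = card {1::nat}"
    by (rule Max_card_matchings_eq_card_offline[of _ _ fork_E2_trusted])
       (auto simp: fork_E2_trusted_def fork_advice_def matching_def)
  then have "ADVICE fork_E1 fork_E2_trusted fork_advice = 2"
    unfolding ADVICE_def by (simp add: fork_advice_def)
  moreover have "alg_value alg1 alg2 {0} {1} {0, 1} fork_E1 fork_E2_trusted fork_advice
                   \<le> 1 + fork_x1 alg1 (0, 0)"
    using fork_second_stage_le[OF assms(1), of 1 fork_E2_trusted]
    unfolding alg_value_eq_sum_edges[OF inst(1)] by (simp add: fork_E1_def fork_E2_trusted_def)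
  ultimately show ?thesis using assms(2) inst unfolding consistent_def by fastforce
qed

lemma fork_robustness_bound:
  assumes "valid_alg alg1 alg2" "robust alg1 alg2 R"
  shows "2 * R \<le> 1 + fork_x1 alg1 (0, 1)"
proof -
  have inst: "two_stage_instance {0} {1} {0, 1} fork_E1 fork_E2_betrayed"
    "valid_advice fork_E1 fork_advice"
    using fork_instance[of fork_E2_betrayed] by (auto simp: fork_E2_betrayed_def)
  have "OPT fork_E1 fork_E2_betrayed = card {0, 1::nat}"
    by (rule OPT_eq_card_offline[OF inst(1), of "{(0, 1), (1, 0)}"])
       (auto simp: fork_E1_def fork_E2_betrayed_def matching_def)
  moreover have "alg_value alg1 alg2 {0} {1} {0, 1} fork_E1 fork_E2_betrayed fork_advice
                   \<le> 1 + fork_x1 alg1 (0, 1)"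
    using fork_second_stage_le[OF assms(1), of 0 fork_E2_betrayed]
    unfolding alg_value_eq_sum_edges[OF inst(1)] by (simp add: fork_E1_def fork_E2_betrayed_def)
  ultimately show ?thesis using assms(2) inst unfolding robust_def by fastforce
qed

theorem mainTheorem6:
  fixes alg1 :: stage1 and alg2 :: stage2 and R C :: real
  assumes "valid_alg alg1 alg2"
    and "robust alg1 alg2 R"
    and "consistent alg1 alg2 C"
  shows "R + C \<le> 3 / 2"
  using fork_robustness_bound[OF assms(1,2)] fork_consistency_bound[OF assms(1,3)]
    fork_first_stage_mass[OF assms(1)]
  by linarith

end
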